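(* Suppose $\|\mu_a\|_\infty,\|\widehat\mu_a\|_\infty\le B<\infty$ a.s. for all $a$, and $\mathbb{P}$ satisfies the margin condition with some $\kappa>0$, $\alpha>0$. Let $C^*\in\mathcal{C}_k^*$ and $f_{C}(x)=\|x-\Pi_C(x)\|_2^2$. Then $$\big|\mathbb{P}\{f_{C^*}(\widehat\mu)-f_{C^*}(\mu)\}\big|\lesssim\max_a\|\widehat\mu_a-\mu_a\|_{\mathbb{P},1}+\max_a\|\widehat\mu_a-\mu_a\|_\infty^{\alpha+1}+\frac1\kappa\max_a\big(\|\widehat\mu_a-\mu_a\|_\infty\|\widehat\mu_a-\mu_a\|_{\mathbb{P},1}\big).$$
   Context: $Z=(Y,A,X)\sim\mathbb{P}$, $A\in\mathcal{A}=\{1,\dots,p\}$; $\mu_a(X)=\mathbb{E}(Y\mid X,A=a)$, $\mu=(\mu_1(X),\dots,\mu_p(X))^\top$, $\widehat\mu$ an estimator of $\mu$ held fixed under $\mathbb{P}$ (i.e. $\mathbb{P}\{g(\widehat\mu)\}=\int g(\widehat\mu(x))d\mathbb{P}$). Codebooks $C=\{c_1,\dots,c_k\}\subset\mathbb{R}^p$; $\mathcal{C}_k$ those of size $k$ in the image of $\mu$; $\Pi_C(x)=\arg\min_{c\in C}\|c-x\|_2^2$; $R(C)=\mathbb{E}\|\mu-\Pi_C(\mu)\|_2^2$; $\mathcal{C}_k^*$ its minimizers. $V_j(C^* )=\{x:\|x-c_j^*\|_2\le\|x-c_i^*\|_2\ \forall i\ne j\}$; $N_{C^*}(t)=\bigcup_j\{x\in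 V_j(C^* ):|\,\|x-c_j^*\|_2-\min_{i\ne j}\|x-c_i^*\|_2\,|\le t\}$; margin condition (radius $\kappa$, rate $\alpha$): for $0\le t\le\kappa$, $\sup_{C^*\in\mathcal{C}_k^*}\mathbb{P}(\mu\in N_{C^*}(t))\lesssim t^\alpha$. $\|f\|_{\mathbb{P},1}=\int|f|d\mathbb{P}$, $\|\cdot\|_\infty$ sup norm; $\lesssim$ inequality up to a multiplicative constant. *)

theory Defs
  imports "HOL-Probability.Probability"
begin

(* Treatment index set A = {1..p} is modelled by a finite type 'p (p = CARD('p)); vectors in
   R^p are  real ^ 'p . *)

definition proj :: "(real ^ 'p) set \<Rightarrow> real ^ 'p \<Rightarrow> real ^ 'p" where
  "proj C x = (SOME c. c \<in> C \<and> (\<forall>c'\<in>C. (norm (c - x))\<^sup>2 \<le> (norm (c' - x))\<^sup>2))"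

definition fC :: "(real ^ 'p) set \<Rightarrow> real ^ 'p \<Rightarrow> real" where
  "fC C x = (norm (x - proj C x))\<^sup>2"

definition risk :: "'z measure \<Rightarrow> ('z \<Rightarrow> 'x) \<Rightarrow> ('x \<Rightarrow> real ^ 'p) \<Rightarrow> (real ^ 'p) set \<Rightarrow> real" where
  "risk M X mu C = (\<integral>z. (norm (mu (X z) - proj C (mu (X z))))\<^sup>2 \<partial>M)"

definition codebooks :: "'z measure \<Rightarrow> ('z \<Rightarrow> 'x) \<Rightarrow> ('x \<Rightarrow> real ^ 'p) \<Rightarrow> nat \<Rightarrow> (real ^ 'p) set set" where
  "codebooks M X mu k = {C. finite C \<and> card C = k \<and> C \<subseteq> mu ` X ` space M}"

definition opt_codebooks :: "'z measure \<Rightarrow> ('z \<Rightarrow> 'x) \<Rightarrow> ('x \<Rightarrow> real ^ 'p) \<Rightarrow> nat \<Rightarrow> (real ^ 'p) set set" where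
  "opt_codebooks M X mu k = {C \<in> codebooks M X mu k. \<forall>C' \<in> codebooks M X mu k. risk M X mu C \<le> risk M X mu C'}"

definition voronoi :: "(real ^ 'p) set \<Rightarrow> real ^ 'p \<Rightarrow> (real ^ 'p) set" where
  "voronoi C c = {x. \<forall>c'\<in>C. c' \<noteq> c \<longrightarrow> dist x c \<le> dist x c'}"

definition margin_region :: "(real ^ 'p) set \<Rightarrow> real \<Rightarrow> (real ^ 'p) set" where
  "margin_region C t = (\<Union>c\<in>C. {x \<in> voronoi C c. \<bar>dist x c - Min ((\<lambda>c'. dist x c') ` (C - {c}))\<bar> \<le> t})"

definition margin_condition ::
  "'z measure \<Rightarrow> ('z \<Rightarrow> 'x) \<Rightarrow> ('x \<Rightarrow> real ^ 'p) \<Rightarrow> nat \<Rightarrow> real \<Rightarrow> real \<Rightarrow> real \<Rightarrow> bool" where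
  "margin_condition M X mu k \<kappa> \<alpha> cm \<longleftrightarrow>
     (\<forall>t. 0 \<le> t \<and> t \<le> \<kappa> \<longrightarrow>
        (\<forall>C \<in> opt_codebooks M X mu k. measure M {z \<in> space M. mu (X z) \<in> margin_region C t} \<le> cm * t powr \<alpha>))"

definition L1norm :: "'z measure \<Rightarrow> ('z \<Rightarrow> 'x) \<Rightarrow> ('x \<Rightarrow> real) \<Rightarrow> real" where
  "L1norm M X g = (\<integral>z. \<bar>g (X z)\<bar> \<partial>M)"

definition supnorm :: "'z measure \<Rightarrow> ('z \<Rightarrow> 'x) \<Rightarrow> ('x \<Rightarrow> real) \<Rightarrow> real" where
  "supnorm M X g = real_of_ereal (esssup M (\<lambda>z. ereal \<bar>g (X z)\<bar>))"

end

theory Submission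
  imports Defs
begin

text \<open>For a finite codebook C we have
fC C = (infdist _ C)^2, so |a^2 - b^2| = |a - b| (a + b) and the 1-Lipschitz continuity of infdist
give |fC C u - fC C v| \<le> 2 (R + |c|) |u - v| on the ball of radius R = p B containing mu and
muhat, for every centre c. The constant must not depend on the codebook, and optimality
provides a centre of norm at most 3 R + 1: if all centres lay farther out, the risk would be at
least (2 R + 1)^2, whereas exchanging a centre for a data point of norm at most R yields a
codebook of risk at most (2 R)^2.\<close>

lemma proj_nearest:
  fixes C :: "(real ^ 'p) set"
  assumes "finite C" "C \<noteq> {}"
  shows "proj C x \<in> C \<and> (\<forall>c\<in>C. dist x (proj C x) \<le> dist x c)"
proof -
  obtain c0 where "is_arg_min (\<lambda>c. dist x c) (\<lambda>c. c \<in> C) c0"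
    using ex_is_arg_min_if_finite[OF assms] by blast
  then have "c0 \<in> C \<and> (\<forall>c\<in>C. (norm (c0 - x))\<^sup>2 \<le> (norm (c - x))\<^sup>2)"
    by (auto simp: is_arg_min_def dist_norm norm_minus_commute not_less)
  then have "proj C x \<in> C \<and> (\<forall>c\<in>C. (norm (proj C x - x))\<^sup>2 \<le> (norm (c - x))\<^sup>2)"
    unfolding proj_def by (rule someI)
  then show ?thesis
    by (simp add: dist_norm norm_minus_commute)
qed

lemma fC_eq_infdist:
  fixes C :: "(real ^ 'p) set"
  assumes "finite C" "C \<noteq> {}"
  shows "fC C x = (infdist x C)\<^sup>2"
proof -
  note nearest = proj_nearest[OF assms, of x]
  have "infdist x C = dist x (proj C x)"
  proof (rule antisym)
    show "infdist x C \<le> dist x (proj C x)"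
      using nearest by (intro infdist_le) blast
    show "dist x (proj C x) \<le> infdist x C"
      unfolding infdist_notempty[OF assms(2)] using nearest assms(2) by (intro cINF_greatest) auto
  qed
  then show ?thesis
    by (simp add: fC_def dist_norm)
qed

lemma borel_measurable_fC:
  fixes C :: "(real ^ 'p) set"
  assumes "finite C" "C \<noteq> {}"
  shows "fC C \<in> borel_measurable borel"
proof -
  have "fC C = (\<lambda>x. (infdist x C)\<^sup>2)"
    using fC_eq_infdist[OF assms] by blast
  moreover have "continuous_on UNIV (\<lambda>x::real ^ 'p. (infdist x C)\<^sup>2)"
    by (intro continuous_intros)
  ultimately show ?thesis
    by (simp add: borel_measurable_continuous_onI)
qed

lemma abs_fC_diff_le:
  fixes C :: "(real ^ 'p) set"
  assumes "finite C" "C \<noteq> {}"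
  shows "\<bar>fC C u - fC C v\<bar> \<le> dist u v * (infdist u C + infdist v C)"
proof -
  have "fC C u - fC C v = (infdist u C - infdist v C) * (infdist u C + infdist v C)"
    by (simp add: fC_eq_infdist[OF assms] power2_eq_square algebra_simps)
  then have "\<bar>fC C u - fC C v\<bar> = \<bar>infdist u C - infdist v C\<bar> * (infdist u C + infdist v C)"
    by (simp add: abs_mult infdist_nonneg)
  also have "\<dots> \<le> dist u v * (infdist u C + infdist v C)"
    by (intro mult_right_mono infdist_triangle_abs add_nonneg_nonneg infdist_nonneg)
  finally show ?thesis .
qed

lemma norm_le_card_mult_if_abs_nth_le:
  fixes x :: "real ^ 'p" and B :: real
  assumes "\<And>a. \<bar>x $ a\<bar> \<le> B"
  shows "norm x \<le> CARD('p) * B"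
proof -
  have "norm x \<le> (\<Sum>a\<in>UNIV. \<bar>x $ a\<bar>)"
    by (rule norm_le_l1_cart)
  also have "\<dots> \<le> CARD('p) * B"
    using sum_bounded_above[of UNIV "\<lambda>a. \<bar>x $ a\<bar>" B] assms by simp
  finally show ?thesis .
qed

lemma L1norm_nonneg: "L1norm M X g \<ge> 0"
  unfolding L1norm_def by (rule integral_nonneg_AE) auto

lemma (in prob_space) supnorm_nonneg: "supnorm M X g \<ge> 0"
proof -
  have "AE z in M. 0 \<le> esssup M (\<lambda>z. ereal \<bar>g (X z)\<bar>)"
    using esssup_AE[of "\<lambda>z. ereal \<bar>g (X z)\<bar>" M] by eventually_elim (rule order_trans, auto)
  then show ?thesis
    unfolding supnorm_def by (intro real_of_ereal_pos) simp
qed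

lemma (in prob_space) AE_witness:
  assumes "AE z in M. P z"
  obtains z where "z \<in> space M" "P z"
proof -
  have "AE z in M. z \<in> space M \<and> P z"
    using assms by auto
  with ae_filter_bot eventually_happens' that show ?thesis
    by blast
qed

lemma risk_eq_integral_fC: "risk M X mu C = (\<integral>z. fC C (mu (X z)) \<partial>M)"
  by (simp add: risk_def fC_def)

lemma (in prob_space) integral_fC_le:
  fixes f :: "'a \<Rightarrow> real ^ 'p"
  assumes f: "f \<in> borel_measurable M" and bounded: "AE z in M. norm (f z) \<le> R"
    and C: "finite C" "c \<in> C"
  shows "integrable M (\<lambda>z. fC C (f z))" and "(\<integral>z. fC C (f z) \<partial>M) \<le> (R + norm c)\<^sup>2"
proof -
  have ne: "C \<noteq> {}"
    using C by blast
  have le: "AE z in M. fC C (f z) \<le> (R + norm c)\<^sup>2"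
    using bounded
  proof eventually_elim
    case (elim z)
    have "infdist (f z) C \<le> dist (f z) c"
      using C by (intro infdist_le)
    also have "\<dots> \<le> R + norm c"
      using elim norm_triangle_ineq4[of "f z" c] by (simp add: dist_norm)
    finally show ?case
      by (simp add: fC_eq_infdist[OF C(1) ne] power_mono infdist_nonneg)
  qed
  show integrable: "integrable M (\<lambda>z. fC C (f z))"
  proof (rule integrable_const_bound)
    show "AE z in M. norm (fC C (f z)) \<le> (R + norm c)\<^sup>2"
      using le by eventually_elim (simp add: fC_def)
    show "(\<lambda>z. fC C (f z)) \<in> borel_measurable M"
      using measurable_compose[OF f borel_measurable_fC[OF C(1) ne]] .
  qed
  have "(\<integral>z. fC C (f z) \<partial>M) \<le> (\<integral>z. (R + norm c)\<^sup>2 \<partial>M)"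
    using integrable le by (intro integral_mono_AE) auto
  then show "(\<integral>z. fC C (f z) \<partial>M) \<le> (R + norm c)\<^sup>2"
    by (simp add: prob_space)
qed

lemma (in prob_space) integral_fC_ge:
  fixes f :: "'a \<Rightarrow> real ^ 'p"
  assumes f: "f \<in> borel_measurable M" and bounded: "AE z in M. norm (f z) \<le> R"
    and C: "finite C" "C \<noteq> {}" and far: "\<And>c. c \<in> C \<Longrightarrow> R + d \<le> norm c"
    and "d \<ge> 0"
  shows "d\<^sup>2 \<le> (\<integral>z. fC C (f z) \<partial>M)"
proof -
  obtain c1 where c1: "c1 \<in> C"
    using C by blast
  have "AE z in M. d\<^sup>2 \<le> fC C (f z)"
    using bounded
  proof eventually_elim
    case (elim z)
    have "d \<le> infdist (f z) C"
      unfolding infdist_notempty[OF C(2)]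
    proof (rule cINF_greatest)
      fix c assume "c \<in> C"
      then show "d \<le> dist (f z) c"
        using far elim norm_triangle_ineq2[of c "f z"] by (force simp: dist_commute dist_norm)
    qed (use C in blast)
    then show ?case
      using \<open>d \<ge> 0\<close> by (simp add: fC_eq_infdist[OF C] power_mono)
  qed
  then show ?thesis
    using integral_fC_le(1)[OF f bounded C(1) c1] integral_mono_AE[of M "\<lambda>_. d\<^sup>2"]
    by (simp add: prob_space)
qed

lemma (in prob_space) opt_codebook_has_centre_near_data:
  assumes mu: "(\<lambda>z. mu (X z)) \<in> borel_measurable M"
    and bounded: "AE z in M. norm (mu (X z)) \<le> R"
    and opt: "C \<in> opt_codebooks M X mu k" and "k \<ge> 1"
  shows "\<exists>c\<in>C. norm c \<le> 3 * R + 1"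
proof (rule ccontr)
  assume "\<not> ?thesis"
  then have far: "\<And>c. c \<in> C \<Longrightarrow> 3 * R + 1 < norm c"
    by auto
  have fin: "finite C" and card: "card C = k" and sub: "C \<subseteq> mu ` X ` space M"
    and minimal: "\<And>C'. C' \<in> codebooks M X mu k \<Longrightarrow> risk M X mu C \<le> risk M X mu C'"
    using opt by (auto simp: opt_codebooks_def codebooks_def)
  obtain c1 where c1: "c1 \<in> C"
    using card \<open>k \<ge> 1\<close> by fastforce
  obtain z0 where z0: "z0 \<in> space M" "norm (mu (X z0)) \<le> R"
    using AE_witness[OF bounded] by blast
  define p where "p = mu (X z0)"
  have R: "R \<ge> 0"
    using z0 norm_ge_zero order_trans by blast
  have lower: "(2 * R + 1)\<^sup>2 \<le> risk M X mu C"
    unfolding risk_eq_integral_fC using fin c1 far R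
    by (intro integral_fC_ge[OF mu bounded]) (auto intro: less_imp_le)
  have "p \<notin> C"
    using far z0 R unfolding p_def by force
  then have "insert p (C - {c1}) \<in> codebooks M X mu k"
    using fin card c1 sub z0 \<open>k \<ge> 1\<close> by (auto simp: codebooks_def p_def card_insert_if)
  then have "risk M X mu C \<le> risk M X mu (insert p (C - {c1}))"
    by (rule minimal)
  also have "\<dots> \<le> (R + norm p)\<^sup>2"
    unfolding risk_eq_integral_fC using fin by (intro integral_fC_le[OF mu bounded]) auto
  also have "\<dots> \<le> (2 * R)\<^sup>2"
    using z0 R unfolding p_def by (intro power_mono) auto
  finally show False
    using lower R by (simp add: power2_eq_square algebra_simps)
qed

lemma (in prob_space) abs_integral_fC_diff_le:
  fixes mu muhat :: "'x \<Rightarrow> real ^ 'p" and B :: real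
  assumes mu: "(\<lambda>z. mu (X z)) \<in> borel_measurable M"
    and muhat: "(\<lambda>z. muhat (X z)) \<in> borel_measurable M"
    and bounded: "AE z in M. \<forall>a. \<bar>mu (X z) $ a\<bar> \<le> B \<and> \<bar>muhat (X z) $ a\<bar> \<le> B"
    and C: "finite C" "c \<in> C"
  shows "\<bar>\<integral>z. fC C (muhat (X z)) - fC C (mu (X z)) \<partial>M\<bar>
    \<le> 2 * (CARD('p) * B + norm c) * (\<Sum>a\<in>UNIV. L1norm M X (\<lambda>x. muhat x $ a - mu x $ a))"
proof -
  define R where "R = CARD('p) * B"
  define D where "D = 2 * (R + norm c)"
  define e where "e a = (\<lambda>z. \<bar>muhat (X z) $ a - mu (X z) $ a\<bar>)" for a
  have ne: "C \<noteq> {}"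
    using C by blast
  have e_integrable: "integrable M (e a)" for a
  proof (rule integrable_const_bound)
    show "AE z in M. norm (e a z) \<le> 2 * B"
      using bounded
    proof eventually_elim
      case (elim z)
      then have "\<bar>muhat (X z) $ a\<bar> \<le> B" "\<bar>mu (X z) $ a\<bar> \<le> B"
        by auto
      then show ?case
        unfolding e_def real_norm_def by linarith
    qed
    show "e a \<in> borel_measurable M"
      unfolding e_def
      by (intro borel_measurable_abs borel_measurable_diff
          measurable_compose[OF muhat borel_measurable_nth] measurable_compose[OF mu borel_measurable_nth])
  qed
  have lipschitz: "AE z in M. \<bar>fC C (muhat (X z)) - fC C (mu (X z))\<bar> \<le> D * (\<Sum>a\<in>UNIV. e a z)"
    using bounded
  proof eventually_elim
    case (elim z)
    let ?u = "muhat (X z)" and ?v = "mu (X z)"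
    have "infdist w C \<le> R + norm c" if "norm w \<le> R" for w
      using infdist_le[OF C(2), of w] norm_triangle_ineq4[of w c] that by (simp add: dist_norm)
    moreover have "norm ?u \<le> R" "norm ?v \<le> R"
      using elim norm_le_card_mult_if_abs_nth_le[of ?u B] norm_le_card_mult_if_abs_nth_le[of ?v B]
      by (auto simp: R_def)
    ultimately have "infdist ?u C \<le> R + norm c" "infdist ?v C \<le> R + norm c"
      by blast+
    then have "infdist ?u C + infdist ?v C \<le> D"
      unfolding D_def by (metis add_mono mult_2)
    moreover have "dist ?u ?v \<le> (\<Sum>a\<in>UNIV. e a z)"
      using norm_le_l1_cart[of "?u - ?v"] by (simp add: dist_norm e_def)
    ultimately have "dist ?u ?v * (infdist ?u C + infdist ?v C) \<le> (\<Sum>a\<in>UNIV. e a z) * D"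
      by (intro mult_mono) (auto simp: infdist_nonneg e_def sum_nonneg)
    then show ?case
      using abs_fC_diff_le[OF C(1) ne, of ?u ?v] by (simp add: mult.commute)
  qed
  have "\<bar>\<integral>z. fC C (muhat (X z)) - fC C (mu (X z)) \<partial>M\<bar>
      \<le> (\<integral>z. \<bar>fC C (muhat (X z)) - fC C (mu (X z))\<bar> \<partial>M)"
    by (rule integral_abs_bound)
  also have "\<dots> \<le> (\<integral>z. D * (\<Sum>a\<in>UNIV. e a z) \<partial>M)"
  proof (rule integral_mono_AE'[OF _ lipschitz])
    show "integrable M (\<lambda>z. D * (\<Sum>a\<in>UNIV. e a z))"
      using e_integrable by simp
    show "AE z in M. 0 \<le> D * (\<Sum>a\<in>UNIV. e a z)"
      using lipschitz by eventually_elim (rule order_trans[OF abs_ge_zero])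
  qed
  also have "\<dots> = D * (\<Sum>a\<in>UNIV. integral\<^sup>L M (e a))"
    using e_integrable by (simp add: integral_sum)
  also have "\<dots> = D * (\<Sum>a\<in>UNIV. L1norm M X (\<lambda>x. muhat x $ a - mu x $ a))"
    by (simp add: L1norm_def e_def)
  finally show ?thesis
    unfolding D_def R_def .
qed

theorem lemmaA3:
  fixes B \<alpha> cm :: real and k :: nat
  assumes "k \<ge> 1" "\<alpha> > 0"
  shows "\<exists>K::real. \<forall>(M :: 'z measure) (N :: 'x measure) (Y :: 'z \<Rightarrow> real) (A :: 'z \<Rightarrow> 'p::finite)
            (X :: 'z \<Rightarrow> 'x) (mu :: 'x \<Rightarrow> real ^ 'p) (muhat :: 'x \<Rightarrow> real ^ 'p) \<kappa> Cstar.
    prob_space M \<and>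
    X \<in> measurable M N \<and> A \<in> measurable M (count_space UNIV) \<and>
    Y \<in> borel_measurable M \<and> integrable M Y \<and>
    mu \<in> borel_measurable N \<and> muhat \<in> borel_measurable N \<and>
    (\<forall>a. AE z in M. A z = a \<longrightarrow>
        mu (X z) $ a = real_cond_exp M (vimage_algebra (space M) (\<lambda>z. (X z, A z))
                                        (N \<Otimes>\<^sub>M count_space UNIV)) Y z) \<and>
    (AE z in M. \<forall>a. \<bar>mu (X z) $ a\<bar> \<le> B \<and> \<bar>muhat (X z) $ a\<bar> \<le> B) \<and>
    \<kappa> > 0 \<and> margin_condition M X mu k \<kappa> \<alpha> cm \<and>
    Cstar \<in> opt_codebooks M X mu k
    \<longrightarrow>
    \<bar>\<integral>z. fC Cstar (muhat (X z)) - fC Cstar (mu (X z)) \<partial>M\<bar>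
      \<le> K * ((MAX a. L1norm M X (\<lambda>x. muhat x $ a - mu x $ a))
             + (MAX a. supnorm M X (\<lambda>x. muhat x $ a - mu x $ a)) powr (\<alpha> + 1)
             + (1 / \<kappa>) * (MAX a. supnorm M X (\<lambda>x. muhat x $ a - mu x $ a)
                                  * L1norm M X (\<lambda>x. muhat x $ a - mu x $ a)))"
proof -
  define R where "R = CARD('p) * \<bar>B\<bar>"
  define K where "K = 2 * (R + (3 * R + 1)) * CARD('p)"
  have R: "R \<ge> 0"
    unfolding R_def by simp
  show ?thesis
  proof (rule exI[of _ K], intro allI impI, elim conjE)
    fix M :: "'z measure" and N :: "'x measure" and X :: "'z \<Rightarrow> 'x"
      and mu muhat :: "'x \<Rightarrow> real ^ 'p" and \<kappa> :: real and Cstar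
    assume "prob_space M" and X: "X \<in> measurable M N"
      and mu: "mu \<in> borel_measurable N" and muhat: "muhat \<in> borel_measurable N"
      and bounded: "AE z in M. \<forall>a. \<bar>mu (X z) $ a\<bar> \<le> B \<and> \<bar>muhat (X z) $ a\<bar> \<le> B"
      and "\<kappa> > 0" and opt: "Cstar \<in> opt_codebooks M X mu k"
    interpret prob_space M by fact
    let ?L = "\<lambda>a. L1norm M X (\<lambda>x. muhat x $ a - mu x $ a)"
    let ?S = "\<lambda>a. supnorm M X (\<lambda>x. muhat x $ a - mu x $ a)"
    have mu_X: "(\<lambda>z. mu (X z)) \<in> borel_measurable M"
      and muhat_X: "(\<lambda>z. muhat (X z)) \<in> borel_measurable M"
      using measurable_compose[OF X mu] measurable_compose[OF X muhat] by simp_all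
    have bounded_abs: "AE z in M. \<forall>a. \<bar>mu (X z) $ a\<bar> \<le> \<bar>B\<bar> \<and> \<bar>muhat (X z) $ a\<bar> \<le> \<bar>B\<bar>"
      using bounded by eventually_elim (meson abs_ge_self order_trans)
    then have "AE z in M. norm (mu (X z)) \<le> R"
      by eventually_elim (simp add: R_def norm_le_card_mult_if_abs_nth_le)
    then obtain c where c: "c \<in> Cstar" "norm c \<le> 3 * R + 1"
      using opt_codebook_has_centre_near_data[OF mu_X _ opt \<open>k \<ge> 1\<close>] by blast
    have "finite Cstar"
      using opt by (simp add: opt_codebooks_def codebooks_def)
    have "\<bar>\<integral>z. fC Cstar (muhat (X z)) - fC Cstar (mu (X z)) \<partial>M\<bar>
        \<le> 2 * (R + norm c) * (\<Sum>a\<in>UNIV. ?L a)"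
      using abs_integral_fC_diff_le[where mu=mu and muhat=muhat and X=X,
          OF mu_X muhat_X bounded_abs \<open>finite Cstar\<close> c(1)]
      by (simp add: R_def)
    also have "\<dots> \<le> 2 * (R + (3 * R + 1)) * (CARD('p) * (MAX a. ?L a))"
      using c(2) R L1norm_nonneg
      by (intro mult_mono sum_bounded_above[of UNIV ?L, simplified] Max_ge sum_nonneg) auto
    also have "\<dots> = K * (MAX a. ?L a)"
      unfolding K_def by simp
    also have "\<dots>
        \<le> K * ((MAX a. ?L a) + (MAX a. ?S a) powr (\<alpha> + 1) + (1 / \<kappa>) * (MAX a. ?S a * ?L a))"
    proof (rule mult_left_mono)
      have "0 \<le> (MAX a. ?S a * ?L a)"
        by (simp add: Max_ge_iff supnorm_nonneg L1norm_nonneg)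
      then have "0 \<le> (1 / \<kappa>) * (MAX a. ?S a * ?L a)"
        using \<open>\<kappa> > 0\<close> by simp
      then show "(MAX a. ?L a)
          \<le> (MAX a. ?L a) + (MAX a. ?S a) powr (\<alpha> + 1) + (1 / \<kappa>) * (MAX a. ?S a * ?L a)"
        using powr_ge_zero[of "MAX a. ?S a" "\<alpha> + 1"] by linarith
      show "0 \<le> K"
        unfolding K_def using R by simp
    qed
    finally show "\<bar>\<integral>z. fC Cstar (muhat (X z)) - fC Cstar (mu (X z)) \<partial>M\<bar>
      \<le> K * ((MAX a. ?L a) + (MAX a. ?S a) powr (\<alpha> + 1) + (1 / \<kappa>) * (MAX a. ?S a * ?L a))" .
  qed
qed

end
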